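(* Let $X=(x_n)_{n\ge1}$ be a sequence of positive real numbers such that for every $\varepsilon>0$, for all sufficiently large $n$, $$x_{n+1}>\Big(1+\frac{1}{n^{\varepsilon}}\Big)x_n.$$ Then for almost every $\alpha\in\mathbb{R}$, $$\delta_{\min}^{\alpha}(N)<\frac{1}{N^{2-o(1)}},$$ where the rate of decay of the $o(1)$ term depends on $\alpha$.
   Context: For $x\in\mathbb{R}$, $\|x\|=\min_{k\in\mathbb{Z}}|x-k|$. For $\alpha\in\mathbb{R}$, $\delta_{\min}^{\alpha}(N)=\min\{\|\alpha x_m-\alpha x_n\| : 1\le m,n\le N,\ m\ne n\}$. The notation $\frac{1}{N^{2-o(1)}}$ means $N^{-(2-f_\alpha(N))}$ for some function $f_\alpha(N)\to0$ as $N\to\infty$, the inequality holding for all sufficiently large $N$. *)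

theory Defs
  imports "HOL-Analysis.Analysis"
begin

definition dist_int :: "real \<Rightarrow> real" where
  "dist_int x = (INF k::int. \<bar>x - of_int k\<bar>)"

text \<open>Minimal gap of the dilated sequence alpha * x_n, n = 1..N, modulo 1 (meaningful for N >= 2).\<close>
definition delta_min :: "real \<Rightarrow> (nat \<Rightarrow> real) \<Rightarrow> nat \<Rightarrow> real" where
  "delta_min \<alpha> x N =
     Min {dist_int (\<alpha> * x m - \<alpha> * x n) | m n. m \<in> {1..N} \<and> n \<in> {1..N} \<and> m \<noteq> n}"

end

theory Submission
  imports Defs "HOL-Real_Asymp.Real_Asymp"
begin

(* Fix 0 < epsilon < 1 and delta = N powr (epsilon - 2), and call alpha well spaced if
   alpha x_1, ..., alpha x_N are pairwise delta-separated modulo 1.  Take K = N div 2 and an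
   interval [a, a + h) with h x_K = delta / 4 containing a well-spaced point.  Then the numbers
   a x_m, n0 <= m <= K, are delta/2-separated modulo 1, and every well-spaced alpha in the interval
   keeps alpha x_(K + i s) at distance delta/4 from all of them.  The growth hypothesis allows
   s ~ N powr (epsilon/2) ln N with x_(n + s) >= (32 / delta) x_n, so along the L ~ N / s scales
   y_i = x_(K + i s) the grid cells of mesh 1 / y_i lose a proportion q / 2 ~ N powr (epsilon - 1)
   each time: the well-spaced alpha in [-M, M] have measure O(exp (- q L / 2)) = O(N powr -2).
   Borel-Cantelli then gives, for almost every alpha, delta_min < N powr (epsilon - 2) for large N,
   and a diagonal choice over epsilon = 1 / (k + 2) yields the o(1) exponent. *)

section \<open>Distance to the nearest integer\<close>

lemma dist_int_le: "dist_int x \<le> \<bar>x - of_int k\<bar>"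
  unfolding dist_int_def by (rule cINF_lower) (auto intro: bdd_belowI[of _ 0])

lemma dist_int_greatest: "(\<And>k. c \<le> \<bar>x - of_int k\<bar>) \<Longrightarrow> c \<le> dist_int x"
  unfolding dist_int_def by (rule cINF_greatest) auto

lemma dist_int_le_abs: "dist_int x \<le> \<bar>x\<bar>"
  using dist_int_le[of x 0] by simp

lemma dist_int_add_le: "dist_int (x + y) \<le> dist_int x + dist_int y"
proof -
  have "dist_int (x + y) - dist_int x \<le> \<bar>y - of_int l\<bar>" for l
  proof -
    have "dist_int (x + y) - \<bar>y - of_int l\<bar> \<le> \<bar>x - of_int k\<bar>" for k
      using dist_int_le[of "x + y" "k + l"] by (simp add: abs_le_iff)
    then have "dist_int (x + y) - \<bar>y - of_int l\<bar> \<le> dist_int x"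
      by (rule dist_int_greatest)
    then show ?thesis by simp
  qed
  then have "dist_int (x + y) - dist_int x \<le> dist_int y"
    by (rule dist_int_greatest)
  then show ?thesis by simp
qed

lemma dist_int_minus: "dist_int (- x) = dist_int x"
proof -
  have "dist_int (- x) \<le> dist_int x" for x
  proof (rule dist_int_greatest)
    fix k
    have "\<bar>- x - of_int (- k)\<bar> = \<bar>x - of_int k\<bar>" by linarith
    then show "dist_int (- x) \<le> \<bar>x - of_int k\<bar>"
      using dist_int_le[of "- x" "- k"] by simp
  qed
  from this[of x] this[of "- x"] show ?thesis by simp
qed

lemma dist_int_lipschitz: "\<bar>dist_int x - dist_int y\<bar> \<le> \<bar>x - y\<bar>"
proof -
  have "dist_int x \<le> dist_int y + \<bar>x - y\<bar>" for x y
    using dist_int_add_le[of y "x - y"] dist_int_le_abs[of "x - y"] by simp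
  from this[of x y] this[of y x] show ?thesis
    by (simp add: abs_le_iff abs_minus_commute)
qed

lemma borel_measurable_dist_int [measurable]: "dist_int \<in> borel_measurable borel"
proof -
  have "continuous_on UNIV dist_int"
    unfolding continuous_on_iff by (metis dist_int_lipschitz dist_real_def le_less_trans)
  then show ?thesis
    by (rule borel_measurable_continuous_onI)
qed

section \<open>Grid cells avoiding a separated set modulo one\<close>

definition grid_cell :: "real \<Rightarrow> int \<Rightarrow> real set" where
  "grid_cell y k = {of_int k / y ..< (of_int k + 1) / y}"

lemma mem_grid_cell_iff:
  "y > 0 \<Longrightarrow> \<alpha> \<in> grid_cell y k \<longleftrightarrow> of_int k \<le> \<alpha> * y \<and> \<alpha> * y < of_int k + 1"
  by (simp add: grid_cell_def pos_divide_le_eq pos_less_divide_eq)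

lemma floor_mem_grid_cell: "y > 0 \<Longrightarrow> \<alpha> \<in> grid_cell y \<lfloor>\<alpha> * y\<rfloor>"
  by (simp add: mem_grid_cell_iff)

lemma left_end_mem_grid_cell: "y > 0 \<Longrightarrow> of_int k / y \<in> grid_cell y k"
  by (simp add: mem_grid_cell_iff)

lemma grid_cell_fmeasurable: "grid_cell y k \<in> fmeasurable lborel"
proof (rule fmeasurableI2[of "cbox (of_int k / y) ((of_int k + 1) / y)"])
  show "cbox (of_int k / y) ((of_int k + 1) / y) \<in> fmeasurable lborel"
    by (rule fmeasurable_cbox)
qed (auto simp: grid_cell_def)

lemma measure_UN_grid_cells_le:
  assumes "y > 0" "finite S"
  shows "measure lborel (\<Union>k\<in>S. grid_cell y k) \<le> real (card S) / y"
proof -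
  have cell: "measure lborel (grid_cell y k) = 1 / y" for k
  proof -
    have "of_int k / y \<le> (of_int k + 1) / y"
      using assms(1) by (simp add: divide_right_mono)
    moreover have "(of_int k + 1) / y - of_int k / y = 1 / y"
      by (simp add: diff_divide_distrib[symmetric])
    ultimately show ?thesis by (simp add: grid_cell_def)
  qed
  have "measure lborel (\<Union>k\<in>S. grid_cell y k) \<le> (\<Sum>k\<in>S. measure lborel (grid_cell y k))"
    using assms(2) by (intro measure_UNION_le) (auto simp: grid_cell_def)
  then show ?thesis by (simp add: cell)
qed

lemma card_grid_cells_meeting_le:
  fixes k :: int
  assumes y: "y > 0" "y' > 0"
  defines "A \<equiv> {k'. grid_cell y' k' \<inter> grid_cell y k \<noteq> {}}"
  shows "finite A" "real (card A) \<le> y' / y + 2"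
proof -
  let ?r = "y' / y"
  have r: "?r > 0" using y by simp
  have sub: "A \<subseteq> {\<lfloor>of_int k * ?r\<rfloor> .. \<lceil>(of_int k + 1) * ?r\<rceil> - 1}"
  proof
    fix k' assume "k' \<in> A"
    then obtain \<alpha> where "\<alpha> \<in> grid_cell y' k'" "\<alpha> \<in> grid_cell y k"
      by (auto simp: A_def)
    then have \<alpha>: "of_int k' \<le> \<alpha> * y'" "\<alpha> * y' < of_int k' + 1"
      "of_int k \<le> \<alpha> * y" "\<alpha> * y < of_int k + 1"
      using y by (simp_all add: mem_grid_cell_iff)
    have "\<alpha> * y' = \<alpha> * y * ?r" using y by simp
    moreover have "of_int k * ?r \<le> \<alpha> * y * ?r"
      using \<alpha>(3) r by (intro mult_right_mono) auto
    moreover have "\<alpha> * y * ?r < (of_int k + 1) * ?r"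
      using \<alpha>(4) r by (intro mult_strict_right_mono) auto
    ultimately have "of_int k' < (of_int k + 1) * ?r" "of_int k * ?r < of_int k' + 1"
      using \<alpha>(1,2) by linarith+
    then have "k' \<le> \<lceil>(of_int k + 1) * ?r\<rceil> - 1" "\<lfloor>of_int k * ?r\<rfloor> \<le> k'"
      by linarith+
    then show "k' \<in> {\<lfloor>of_int k * ?r\<rfloor> .. \<lceil>(of_int k + 1) * ?r\<rceil> - 1}" by simp
  qed
  then show "finite A" using finite_subset by blast
  have "real (card A) \<le> real (card {\<lfloor>of_int k * ?r\<rfloor> .. \<lceil>(of_int k + 1) * ?r\<rceil> - 1})"
    using sub by (intro of_nat_mono card_mono) auto
  also have "\<dots> \<le> ?r + 2"
  proof -
    have "\<lceil>(of_int k + 1) * ?r\<rceil> - \<lfloor>of_int k * ?r\<rfloor> \<le> (of_int k + 1) * ?r + 1 - (of_int k * ?r - 1)"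
      by linarith
    also have "\<dots> = ?r + 2" by (simp add: algebra_simps)
    finally show ?thesis using r by (simp add: of_nat_nat)
  qed
  finally show "real (card A) \<le> y' / y + 2" .
qed

lemma grid_cells_inside_interval:
  assumes "y > 0"
  obtains B where "finite B" "real (card B) \<ge> l * y - 2"
    "\<And>k. k \<in> B \<Longrightarrow> grid_cell y k \<subseteq> {u<..<u + l}"
proof -
  define B where "B = {\<lfloor>u * y\<rfloor> + 1 .. \<lfloor>(u + l) * y\<rfloor> - 1}"
  have "card B = nat (\<lfloor>(u + l) * y\<rfloor> - 1 - \<lfloor>u * y\<rfloor>)" by (simp add: B_def)
  moreover have "\<lfloor>(u + l) * y\<rfloor> - 1 - \<lfloor>u * y\<rfloor> \<ge> (u + l) * y - 2 - u * y" by linarith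
  ultimately have "real (card B) \<ge> l * y - 2" by (simp add: algebra_simps)
  moreover have "grid_cell y k \<subseteq> {u<..<u + l}" if "k \<in> B" for k
  proof
    fix \<alpha> assume "\<alpha> \<in> grid_cell y k"
    then have "of_int k \<le> \<alpha> * y" "\<alpha> * y < of_int k + 1"
      using assms by (simp_all add: mem_grid_cell_iff)
    moreover have "\<lfloor>u * y\<rfloor> + 1 \<le> k" "k + 1 \<le> \<lfloor>(u + l) * y\<rfloor>"
      using that by (auto simp: B_def)
    ultimately have "u * y < \<alpha> * y" "\<alpha> * y < (u + l) * y"
      by linarith+
    then show "\<alpha> \<in> {u<..<u + l}" using assms by simp
  qed
  ultimately show thesis by (intro that[of B]) (auto simp: B_def)
qed

text \<open>In the coordinate \<open>\<alpha> * y\<close> the interval starts at \<open>k + frac c\<close>, or is pushed left so as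
  to end at the right end of the cell.\<close>
lemma near_interval_in_grid_cell:
  assumes y: "y > 0" and r: "0 < r" "r \<le> 1"
  obtains u where "{u<..<u + r / y} \<subseteq> grid_cell y k"
    "\<And>\<alpha>. \<alpha> \<in> {u<..<u + r / y} \<Longrightarrow> dist_int (\<alpha> * y - c) < r"
proof -
  define U where "U = min (of_int k + frac c) (of_int k + 1 - r)"
  have frac: "0 \<le> frac c" "frac c < 1" by (simp_all add: frac_lt_1)
  have U: "of_int k \<le> U" "U + r \<le> of_int k + 1"
    using r frac by (simp_all add: U_def)
  have scaled: "U < \<alpha> * y \<and> \<alpha> * y < U + r" if "\<alpha> \<in> {U / y<..<U / y + r / y}" for \<alpha>
    using that y by (simp add: field_simps)
  have "{U / y<..<U / y + r / y} \<subseteq> grid_cell y k"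
  proof
    fix \<alpha> assume "\<alpha> \<in> {U / y<..<U / y + r / y}"
    with scaled have "U < \<alpha> * y" "\<alpha> * y < U + r" by auto
    with U y show "\<alpha> \<in> grid_cell y k"
      by (simp add: mem_grid_cell_iff)
  qed
  moreover have "dist_int (\<alpha> * y - c) < r" if "\<alpha> \<in> {U / y<..<U / y + r / y}" for \<alpha>
  proof -
    have "dist_int (\<alpha> * y - c) \<le> \<bar>\<alpha> * y - c - of_int (k - \<lfloor>c\<rfloor>)\<bar>"
      by (rule dist_int_le)
    also have "\<dots> = \<bar>\<alpha> * y - (of_int k + frac c)\<bar>" by (simp add: frac_def)
    also have "\<dots> < r"
      using scaled[OF that] frac by (auto simp: U_def min_def split: if_splits)
    finally show ?thesis .
  qed
  ultimately show thesis by (rule that)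
qed

lemma near_subcells_of_grid_cell:
  assumes y: "y > 0" "y' > 0" and r: "0 < r" "r \<le> 1"
  obtains B where "finite B" "real (card B) \<ge> r * y' / y - 2"
    "\<And>k'. k' \<in> B \<Longrightarrow> grid_cell y' k' \<subseteq> grid_cell y k"
    "\<And>k' \<alpha>. k' \<in> B \<Longrightarrow> \<alpha> \<in> grid_cell y' k' \<Longrightarrow> dist_int (\<alpha> * y - c) < r"
proof -
  obtain u where u: "{u<..<u + r / y} \<subseteq> grid_cell y k"
    "\<And>\<alpha>. \<alpha> \<in> {u<..<u + r / y} \<Longrightarrow> dist_int (\<alpha> * y - c) < r"
    using near_interval_in_grid_cell[OF y(1) r] by metis
  obtain B where B: "finite B" "real (card B) \<ge> r / y * y' - 2"
    "\<And>k'. k' \<in> B \<Longrightarrow> grid_cell y' k' \<subseteq> {u<..<u + r / y}"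
    using grid_cells_inside_interval[OF y(2)] by metis
  show thesis
  proof (rule that[of B])
    show "r * y' / y - 2 \<le> real (card B)" using B(2) by simp
    show "grid_cell y' k' \<subseteq> grid_cell y k" if "k' \<in> B" for k'
      using B(3)[OF that] u(1) by blast
    show "dist_int (\<alpha> * y - c) < r" if "k' \<in> B" "\<alpha> \<in> grid_cell y' k'" for k' \<alpha>
      using B(3)[OF that(1)] u(2) that(2) by blast
  qed (rule B(1))
qed

definition near_mod_one :: "(nat \<Rightarrow> real) \<Rightarrow> nat set \<Rightarrow> real \<Rightarrow> real set" where
  "near_mod_one c B r = {t. \<exists>m\<in>B. dist_int (t - c m) < r}"

lemma near_mod_one_sets: "finite B \<Longrightarrow> near_mod_one c B r \<in> sets borel"
  unfolding near_mod_one_def by measurable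

text \<open>By the \<open>2 r\<close>-separation, the sets of subcells near the different points \<open>c m\<close> are
  disjoint, so each contributes its own \<open>r * y' / y - 2\<close> removed subcells.\<close>
lemma card_surviving_subcells_le:
  fixes k :: int
  assumes y: "y > 0" "y' > 0" and B: "finite B" and r: "0 < r" "r \<le> 1"
    and sep: "\<And>m m'. m \<in> B \<Longrightarrow> m' \<in> B \<Longrightarrow> m \<noteq> m' \<Longrightarrow> 2 * r \<le> dist_int (c m - c m')"
  defines "T \<equiv> {k'. \<exists>\<alpha> \<in> grid_cell y' k' \<inter> grid_cell y k. \<alpha> * y \<notin> near_mod_one c B r}"
  shows "finite T" "real (card T) \<le> y' / y * (1 - real (card B) * r) + 2 * real (card B) + 2"
proof -
  define A where "A = {k'. grid_cell y' k' \<inter> grid_cell y k \<noteq> {}}"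
  have A: "finite A" "real (card A) \<le> y' / y + 2"
    unfolding A_def by (rule card_grid_cells_meeting_le[OF y])+
  have "\<exists>D. finite D \<and> real (card D) \<ge> r * y' / y - 2 \<and>
      (\<forall>k'\<in>D. grid_cell y' k' \<subseteq> grid_cell y k \<and> (\<forall>\<alpha>\<in>grid_cell y' k'. dist_int (\<alpha> * y - c m) < r))"
    for m
    by (rule near_subcells_of_grid_cell[OF y r, of k "c m"]) blast
  then obtain D where D: "\<And>m. finite (D m)" "\<And>m. real (card (D m)) \<ge> r * y' / y - 2"
    "\<And>m k'. k' \<in> D m \<Longrightarrow> grid_cell y' k' \<subseteq> grid_cell y k"
    "\<And>m k' \<alpha>. k' \<in> D m \<Longrightarrow> \<alpha> \<in> grid_cell y' k' \<Longrightarrow> dist_int (\<alpha> * y - c m) < r"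
    by metis
  have DA: "D m \<subseteq> A" for m
  proof
    fix k' assume "k' \<in> D m"
    then have "of_int k' / y' \<in> grid_cell y' k' \<inter> grid_cell y k"
      using D(3) left_end_mem_grid_cell[OF y(2)] by blast
    then show "k' \<in> A" by (auto simp: A_def)
  qed
  have disjoint: "D m \<inter> D m' = {}" if "m \<in> B" "m' \<in> B" "m \<noteq> m'" for m m'
  proof (rule ccontr)
    assume "D m \<inter> D m' \<noteq> {}"
    then obtain k' where k': "k' \<in> D m" "k' \<in> D m'" by auto
    define p where "p = of_int k' / y'"
    have p: "p \<in> grid_cell y' k'"
      unfolding p_def by (rule left_end_mem_grid_cell[OF y(2)])
    have "dist_int (c m - c m') \<le> dist_int (p * y - c m') + dist_int (- (p * y - c m))"
      using dist_int_add_le[of "p * y - c m'" "- (p * y - c m)"] by simp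
    also have "\<dots> < 2 * r"
      using D(4)[OF k'(1) p] D(4)[OF k'(2) p] by (simp only: dist_int_minus)
    finally show False using sep[OF that] by simp
  qed
  have TA: "T \<subseteq> A - (\<Union>m\<in>B. D m)"
    using D(4) by (fastforce simp: T_def A_def near_mod_one_def)
  then show "finite T" using A(1) finite_subset by blast
  have UD: "(\<Union>m\<in>B. D m) \<subseteq> A" using DA by auto
  have card_UN: "card (\<Union>m\<in>B. D m) = (\<Sum>m\<in>B. card (D m))"
    using B D(1) disjoint by (intro card_UN_disjoint) auto
  have "card T \<le> card (A - (\<Union>m\<in>B. D m))"
    using TA A(1) by (intro card_mono) auto
  also have "\<dots> = card A - card (\<Union>m\<in>B. D m)"
    using UD B D(1) by (intro card_Diff_subset) auto
  finally have "real (card T) \<le> real (card A) - real (card (\<Union>m\<in>B. D m))"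
    using card_mono[OF A(1) UD] by linarith
  also have "\<dots> = real (card A) - (\<Sum>m\<in>B. real (card (D m)))"
    by (simp add: card_UN)
  also have "\<dots> \<le> y' / y + 2 - (\<Sum>m\<in>B. r * y' / y - 2)"
    using A(2) sum_mono[of B "\<lambda>_. r * y' / y - 2" "\<lambda>m. real (card (D m))"] D(2) by fastforce
  also have "\<dots> = y' / y * (1 - real (card B) * r) + 2 * real (card B) + 2"
    by (simp add: algebra_simps)
  finally show "real (card T) \<le> y' / y * (1 - real (card B) * r) + 2 * real (card B) + 2" .
qed

lemma survivors_fmeasurable:
  fixes y c :: "nat \<Rightarrow> real"
  assumes "finite B"
  shows "{\<alpha> \<in> {a..<a + h}. \<forall>i\<in>{1..<L}. \<alpha> * y i \<notin> near_mod_one c B r} \<in> fmeasurable lborel"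
proof (rule fmeasurableI2[of "{a..a + h}"])
  show "{a..a + h} \<in> fmeasurable lborel"
    by (metis cbox_interval fmeasurable_cbox)
  have [measurable]: "near_mod_one c B r \<in> sets borel"
    using assms by (rule near_mod_one_sets)
  show "{\<alpha> \<in> {a..<a + h}. \<forall>i\<in>{1..<L}. \<alpha> * y i \<notin> near_mod_one c B r} \<in> sets lborel"
    by measurable
qed auto

text \<open>The ratio hypothesis makes the error term \<open>2 * card B + 2\<close> of
  \<open>card_surviving_subcells_le\<close> at most half of the removed proportion.\<close>
lemma refine_survivor_cover:
  fixes c :: "nat \<Rightarrow> real" and S :: "int set"
  assumes y: "y > 0" "y' > 0" and B: "finite B" and r: "0 < r" "r \<le> 1"
    and sep: "\<And>m m'. m \<in> B \<Longrightarrow> m' \<in> B \<Longrightarrow> m \<noteq> m' \<Longrightarrow> 2 * r \<le> dist_int (c m - c m')"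
    and q: "q = real (card B) * r" "0 < q"
    and ratio: "y * (4 * real (card B) + 4) / q \<le> y'"
    and S: "finite S" "C \<subseteq> (\<Union>k\<in>S. grid_cell y k)"
  shows "\<exists>S'. finite S' \<and> real (card S') \<le> real (card S) * (y' / y * (1 - q / 2)) \<and>
    {\<alpha> \<in> C. \<alpha> * y \<notin> near_mod_one c B r} \<subseteq> (\<Union>k\<in>S'. grid_cell y' k)"
proof -
  define \<rho> where "\<rho> = y' / y"
  define T where "T k = {k'. \<exists>\<alpha> \<in> grid_cell y' k' \<inter> grid_cell y k. \<alpha> * y \<notin> near_mod_one c B r}"
    for k
  have T: "finite (T k)" "real (card (T k)) \<le> \<rho> * (1 - q / 2)" for k
  proof -
    show "finite (T k)"
      unfolding T_def by (rule card_surviving_subcells_le[where c = c, OF y B r sep])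
    have "real (card (T k)) \<le> \<rho> * (1 - q) + 2 * real (card B) + 2"
      using card_surviving_subcells_le(2)[where c = c and k = k, OF y B r sep] q(1)
      by (simp add: T_def \<rho>_def)
    also have "\<dots> \<le> \<rho> * (1 - q / 2)"
    proof -
      have "(4 * real (card B) + 4) / q \<le> \<rho>"
        using ratio y by (simp add: \<rho>_def pos_le_divide_eq mult.commute)
      then have "4 * real (card B) + 4 \<le> \<rho> * q"
        using q(2) by (simp add: pos_divide_le_eq)
      then show ?thesis by (simp add: algebra_simps)
    qed
    finally show "real (card (T k)) \<le> \<rho> * (1 - q / 2)" .
  qed
  define S' where "S' = (\<Union>k\<in>S. T k)"
  have "real (card S') \<le> (\<Sum>k\<in>S. real (card (T k)))"
    unfolding S'_def using card_UN_le[OF S(1), of T] by (metis of_nat_le_iff of_nat_sum)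
  also have "\<dots> \<le> real (card S) * (\<rho> * (1 - q / 2))"
    using sum_mono[of S "\<lambda>k. real (card (T k))" "\<lambda>_. \<rho> * (1 - q / 2)"] T(2) by simp
  finally have card: "real (card S') \<le> real (card S) * (\<rho> * (1 - q / 2))" .
  have "\<alpha> \<in> (\<Union>k\<in>S'. grid_cell y' k)" if \<alpha>: "\<alpha> \<in> C" "\<alpha> * y \<notin> near_mod_one c B r" for \<alpha>
  proof -
    obtain k where k: "k \<in> S" "\<alpha> \<in> grid_cell y k"
      using \<alpha>(1) S(2) by auto
    then have "\<lfloor>\<alpha> * y'\<rfloor> \<in> T k"
      using \<alpha>(2) floor_mem_grid_cell[OF y(2), of \<alpha>] by (auto simp: T_def)
    then show ?thesis
      using k(1) floor_mem_grid_cell[OF y(2), of \<alpha>] by (auto simp: S'_def)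
  qed
  moreover have "finite S'" using S(1) T(1) by (simp add: S'_def)
  ultimately show ?thesis using card unfolding \<rho>_def by blast
qed

lemma survivors_covered_by_grid_cells:
  fixes y c :: "nat \<Rightarrow> real"
  assumes B: "finite B" and r: "0 < r" "r \<le> 1"
    and sep: "\<And>m m'. m \<in> B \<Longrightarrow> m' \<in> B \<Longrightarrow> m \<noteq> m' \<Longrightarrow> 2 * r \<le> dist_int (c m - c m')"
    and h: "h > 0" and y_pos: "\<And>i. 1 \<le> i \<Longrightarrow> y i > 0" and y1: "2 \<le> y 1 * h"
    and q: "q = real (card B) * r" "0 < q" "q \<le> 1"
    and ratio: "\<And>i. 1 \<le> i \<Longrightarrow> i < L \<Longrightarrow> y i * (4 * real (card B) + 4) / q \<le> y (Suc i)"
    and j: "1 \<le> j" "j \<le> L"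
  shows "\<exists>S. finite S \<and> real (card S) \<le> 2 * h * y j * (1 - q / 2) ^ (j - 1) \<and>
    {\<alpha> \<in> {a..<a + h}. \<forall>i\<in>{1..<j}. \<alpha> * y i \<notin> near_mod_one c B r} \<subseteq> (\<Union>k\<in>S. grid_cell (y j) k)"
  using j(1) j
proof (induction j rule: dec_induct)
  case base
  define S where "S = {\<lfloor>a * y 1\<rfloor> .. \<lfloor>(a + h) * y 1\<rfloor>}"
  have y_1: "y 1 > 0" using y_pos by simp
  have "\<lfloor>a * y 1\<rfloor> \<le> \<lfloor>(a + h) * y 1\<rfloor>"
    using h y_1 by (intro floor_mono) simp
  then have "real (card S) \<le> h * y 1 + 2"
    by (simp add: S_def algebra_simps) linarith
  also have "\<dots> \<le> 2 * h * y 1 * (1 - q / 2) ^ (1 - 1)"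
    using y1 by (simp add: mult.commute)
  finally have card: "real (card S) \<le> 2 * h * y 1 * (1 - q / 2) ^ (1 - 1)" .
  have "\<alpha> \<in> (\<Union>k\<in>S. grid_cell (y 1) k)" if "a \<le> \<alpha>" "\<alpha> < a + h" for \<alpha>
  proof -
    have "\<lfloor>\<alpha> * y 1\<rfloor> \<in> S"
      using that y_1 by (auto simp: S_def intro!: floor_mono)
    with floor_mem_grid_cell[OF y_1, of \<alpha>] show ?thesis by auto
  qed
  with card show ?case by (intro exI[of _ S]) (auto simp: S_def)
next
  case (step n)
  then obtain S where S: "finite S" "real (card S) \<le> 2 * h * y n * (1 - q / 2) ^ (n - 1)"
    "{\<alpha> \<in> {a..<a + h}. \<forall>i\<in>{1..<n}. \<alpha> * y i \<notin> near_mod_one c B r} \<subseteq> (\<Union>k\<in>S. grid_cell (y n) k)"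
    by auto
  have y_n: "y n > 0" "y (Suc n) > 0" using y_pos step by auto
  have ratio_n: "y n * (4 * real (card B) + 4) / q \<le> y (Suc n)" using ratio step by simp
  obtain S' where S': "finite S'"
      "real (card S') \<le> real (card S) * (y (Suc n) / y n * (1 - q / 2))"
      "{\<alpha> \<in> {\<alpha> \<in> {a..<a + h}. \<forall>i\<in>{1..<n}. \<alpha> * y i \<notin> near_mod_one c B r}.
          \<alpha> * y n \<notin> near_mod_one c B r} \<subseteq> (\<Union>k\<in>S'. grid_cell (y (Suc n)) k)"
    using refine_survivor_cover[where c = c, OF y_n B r sep q(1,2) ratio_n S(1,3)] by blast
  note S'(2)
  also have "real (card S) * (y (Suc n) / y n * (1 - q / 2))
      \<le> 2 * h * y n * (1 - q / 2) ^ (n - 1) * (y (Suc n) / y n * (1 - q / 2))"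
    using S(2) q(3) y_n by (intro mult_right_mono) auto
  also have "\<dots> = 2 * h * y (Suc n) * (1 - q / 2) ^ (Suc n - 1)"
    using y_n step(1) by (simp add: power_eq_if)
  finally have card: "real (card S') \<le> 2 * h * y (Suc n) * (1 - q / 2) ^ (Suc n - 1)" .
  have "\<alpha> \<in> (\<Union>k\<in>S'. grid_cell (y (Suc n)) k)"
    if \<alpha>: "\<alpha> \<in> {\<alpha> \<in> {a..<a + h}. \<forall>i\<in>{1..<Suc n}. \<alpha> * y i \<notin> near_mod_one c B r}" for \<alpha>
  proof -
    have "\<alpha> \<in> {\<alpha> \<in> {\<alpha> \<in> {a..<a + h}. \<forall>i\<in>{1..<n}. \<alpha> * y i \<notin> near_mod_one c B r}.
        \<alpha> * y n \<notin> near_mod_one c B r}"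
      using \<alpha> step(1) by simp
    then show ?thesis using S'(3) by (rule subsetD[rotated])
  qed
  with S'(1) card show ?case by blast
qed

lemma measure_survivors_le:
  fixes y c :: "nat \<Rightarrow> real"
  assumes B: "finite B" and r: "0 < r" "r \<le> 1"
    and sep: "\<And>m m'. m \<in> B \<Longrightarrow> m' \<in> B \<Longrightarrow> m \<noteq> m' \<Longrightarrow> 2 * r \<le> dist_int (c m - c m')"
    and h: "h > 0" and y_pos: "\<And>i. 1 \<le> i \<Longrightarrow> y i > 0" and y1: "2 \<le> y 1 * h"
    and q: "q = real (card B) * r" "0 < q" "q \<le> 1"
    and ratio: "\<And>i. 1 \<le> i \<Longrightarrow> i < L \<Longrightarrow> y i * (4 * real (card B) + 4) / q \<le> y (Suc i)"
    and L: "1 \<le> L"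
  shows "measure lborel {\<alpha> \<in> {a..<a + h}. \<forall>i\<in>{1..<L}. \<alpha> * y i \<notin> near_mod_one c B r}
    \<le> 2 * h * (1 - q / 2) ^ (L - 1)"
proof -
  obtain S where S: "finite S" "real (card S) \<le> 2 * h * y L * (1 - q / 2) ^ (L - 1)"
    "{\<alpha> \<in> {a..<a + h}. \<forall>i\<in>{1..<L}. \<alpha> * y i \<notin> near_mod_one c B r} \<subseteq> (\<Union>k\<in>S. grid_cell (y L) k)"
    using survivors_covered_by_grid_cells[where c = c and y = y and a = a, OF B r sep h y_pos y1 q ratio L order_refl]
    by blast
  have y_L: "y L > 0" using y_pos L by simp
  have "measure lborel {\<alpha> \<in> {a..<a + h}. \<forall>i\<in>{1..<L}. \<alpha> * y i \<notin> near_mod_one c B r}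
      \<le> measure lborel (\<Union>k\<in>S. grid_cell (y L) k)"
  proof (rule measure_mono_fmeasurable[OF S(3)])
    show "{\<alpha> \<in> {a..<a + h}. \<forall>i\<in>{1..<L}. \<alpha> * y i \<notin> near_mod_one c B r} \<in> sets lborel"
      using survivors_fmeasurable[OF B] by (rule fmeasurableD)
    show "(\<Union>k\<in>S. grid_cell (y L) k) \<in> fmeasurable lborel"
      using S(1) by (intro fmeasurable.finite_UN) (auto intro: grid_cell_fmeasurable)
  qed
  also have "\<dots> \<le> real (card S) / y L"
    by (rule measure_UN_grid_cells_le[OF y_L S(1)])
  also have "\<dots> \<le> 2 * h * y L * (1 - q / 2) ^ (L - 1) / y L"
    using divide_right_mono[OF S(2) less_imp_le[OF y_L]] .
  also have "\<dots> = 2 * h * (1 - q / 2) ^ (L - 1)"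
    using y_L by simp
  finally show ?thesis .
qed

section \<open>Dilates that are well spaced modulo one\<close>

definition well_spaced :: "(nat \<Rightarrow> real) \<Rightarrow> nat \<Rightarrow> real \<Rightarrow> real set" where
  "well_spaced x N \<delta> =
     {\<alpha>. \<forall>m\<in>{1..N}. \<forall>n\<in>{1..N}. m \<noteq> n \<longrightarrow> \<delta> \<le> dist_int (\<alpha> * x m - \<alpha> * x n)}"

lemma well_spaced_sets [measurable]: "well_spaced x N \<delta> \<in> sets borel"
  unfolding well_spaced_def by measurable

lemma delta_min_less_if_not_well_spaced:
  assumes "\<alpha> \<notin> well_spaced x N \<delta>"
  shows "delta_min \<alpha> x N < \<delta>"
proof -
  obtain m n where mn: "m \<in> {1..N}" "n \<in> {1..N}" "m \<noteq> n" "dist_int (\<alpha> * x m - \<alpha> * x n) < \<delta>"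
    using assms by (auto simp: well_spaced_def not_le)
  have "{dist_int (\<alpha> * x m - \<alpha> * x n) | m n. m \<in> {1..N} \<and> n \<in> {1..N} \<and> m \<noteq> n}
      \<subseteq> (\<lambda>(m, n). dist_int (\<alpha> * x m - \<alpha> * x n)) ` ({1..N} \<times> {1..N})"
    by force
  then have "finite {dist_int (\<alpha> * x m - \<alpha> * x n) | m n. m \<in> {1..N} \<and> n \<in> {1..N} \<and> m \<noteq> n}"
    by (rule finite_subset) simp
  then have "delta_min \<alpha> x N \<le> dist_int (\<alpha> * x m - \<alpha> * x n)"
    unfolding delta_min_def by (rule Min_le) (use mn in blast)
  with mn(4) show ?thesis by simp
qed

lemma well_spaced_subset_survivors:
  fixes x :: "nat \<Rightarrow> real" and \<nu> :: "nat \<Rightarrow> nat"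
  assumes \<delta>: "\<delta> > 0" and B: "B \<subseteq> {1..N}" and \<nu>: "\<And>i. i \<in> {1..<L} \<Longrightarrow> \<nu> i \<in> {1..N} - B"
    and close: "\<And>m \<alpha>. m \<in> B \<Longrightarrow> \<alpha> \<in> {a..<a + h} \<Longrightarrow> \<bar>\<alpha> * x m - a * x m\<bar> \<le> \<delta> / 4"
  shows "well_spaced x N \<delta> \<inter> {a..<a + h} \<subseteq>
    {\<alpha> \<in> {a..<a + h}. \<forall>i\<in>{1..<L}. \<alpha> * x (\<nu> i) \<notin> near_mod_one (\<lambda>m. a * x m) B (\<delta> / 4)}"
proof
  fix \<alpha> assume \<alpha>: "\<alpha> \<in> well_spaced x N \<delta> \<inter> {a..<a + h}"
  have "\<alpha> * x (\<nu> i) \<notin> near_mod_one (\<lambda>m. a * x m) B (\<delta> / 4)" if i: "i \<in> {1..<L}" for i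
  proof
    assume "\<alpha> * x (\<nu> i) \<in> near_mod_one (\<lambda>m. a * x m) B (\<delta> / 4)"
    then obtain m where m: "m \<in> B" "dist_int (\<alpha> * x (\<nu> i) - a * x m) < \<delta> / 4"
      by (auto simp: near_mod_one_def)
    have "\<nu> i \<in> {1..N}" "m \<in> {1..N}" "\<nu> i \<noteq> m"
      using \<nu>[OF i] B m(1) by auto
    then have "\<delta> \<le> dist_int (\<alpha> * x (\<nu> i) - \<alpha> * x m)"
      using \<alpha> unfolding well_spaced_def by blast
    moreover have "\<bar>(\<alpha> * x (\<nu> i) - \<alpha> * x m) - (\<alpha> * x (\<nu> i) - a * x m)\<bar> \<le> \<delta> / 4"
      using close[OF m(1)] \<alpha> by (simp add: abs_minus_commute)
    ultimately show False
      using dist_int_lipschitz[of "\<alpha> * x (\<nu> i) - \<alpha> * x m" "\<alpha> * x (\<nu> i) - a * x m"] m(2) \<delta>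
      by linarith
  qed
  with \<alpha> show "\<alpha> \<in> {\<alpha> \<in> {a..<a + h}. \<forall>i\<in>{1..<L}. \<alpha> * x (\<nu> i) \<notin> near_mod_one (\<lambda>m. a * x m) B (\<delta> / 4)}"
    by auto
qed

lemma measure_well_spaced_short_interval_le:
  fixes x :: "nat \<Rightarrow> real" and \<nu> :: "nat \<Rightarrow> nat"
  assumes \<delta>: "0 < \<delta>" "\<delta> \<le> 1"
    and B: "finite B" "B \<subseteq> {1..N}" and x_B: "\<And>m. m \<in> B \<Longrightarrow> 0 < x m \<and> x m \<le> X"
    and h: "0 < h" "h * X = \<delta> / 4"
    and \<nu>: "\<And>i. i \<in> {1..<L} \<Longrightarrow> \<nu> i \<in> {1..N} - B"
    and y_pos: "\<And>i. 1 \<le> i \<Longrightarrow> 0 < x (\<nu> i)" and y1: "2 \<le> x (\<nu> 1) * h"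
    and q: "q = real (card B) * (\<delta> / 4)" "0 < q" "q \<le> 1"
    and ratio: "\<And>i. 1 \<le> i \<Longrightarrow> i < L \<Longrightarrow> x (\<nu> i) * (4 * real (card B) + 4) / q \<le> x (\<nu> (Suc i))"
    and L: "1 \<le> L"
  shows "measure lborel (well_spaced x N \<delta> \<inter> {a..<a + h}) \<le> 2 * h * (1 - q / 2) ^ (L - 1)"
proof (cases "well_spaced x N \<delta> \<inter> {a..<a + h} = {}")
  case True
  then show ?thesis using h(1) q(3) by simp
next
  case False
  then obtain \<alpha>\<^sub>0 where \<alpha>\<^sub>0: "\<alpha>\<^sub>0 \<in> well_spaced x N \<delta>" "\<alpha>\<^sub>0 \<in> {a..<a + h}" by blast
  have close: "\<bar>\<alpha> * x m - a * x m\<bar> \<le> \<delta> / 4" if "m \<in> B" "\<alpha> \<in> {a..<a + h}" for m \<alpha>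
  proof -
    have "\<bar>\<alpha> * x m - a * x m\<bar> = \<bar>\<alpha> - a\<bar> * x m"
      using x_B[OF that(1)] by (simp add: abs_mult left_diff_distrib[symmetric])
    also have "\<dots> \<le> h * X" using that x_B[OF that(1)] by (intro mult_mono) auto
    finally show ?thesis using h(2) by simp
  qed
  have sep: "2 * (\<delta> / 4) \<le> dist_int (a * x m - a * x m')" if "m \<in> B" "m' \<in> B" "m \<noteq> m'" for m m'
  proof -
    have "\<delta> \<le> dist_int (\<alpha>\<^sub>0 * x m - \<alpha>\<^sub>0 * x m')"
      using \<alpha>\<^sub>0(1) B(2) that unfolding well_spaced_def by blast
    moreover have "\<bar>(\<alpha>\<^sub>0 * x m - \<alpha>\<^sub>0 * x m') - (a * x m - a * x m')\<bar> \<le> \<delta> / 2"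
      using close[OF that(1) \<alpha>\<^sub>0(2)] close[OF that(2) \<alpha>\<^sub>0(2)] by linarith
    ultimately show ?thesis
      using dist_int_lipschitz[of "\<alpha>\<^sub>0 * x m - \<alpha>\<^sub>0 * x m'" "a * x m - a * x m'"] by linarith
  qed
  let ?survivors = "{\<alpha> \<in> {a..<a + h}. \<forall>i\<in>{1..<L}.
    \<alpha> * x (\<nu> i) \<notin> near_mod_one (\<lambda>m. a * x m) B (\<delta> / 4)}"
  have "measure lborel (well_spaced x N \<delta> \<inter> {a..<a + h}) \<le> measure lborel ?survivors"
  proof (rule measure_mono_fmeasurable)
    show "well_spaced x N \<delta> \<inter> {a..<a + h} \<subseteq> ?survivors"
      by (rule well_spaced_subset_survivors[OF \<delta>(1) B(2) \<nu> close])
    show "well_spaced x N \<delta> \<inter> {a..<a + h} \<in> sets lborel" by measurable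
    show "?survivors \<in> fmeasurable lborel" by (rule survivors_fmeasurable[OF B(1)])
  qed
  also have "\<dots> \<le> 2 * h * (1 - q / 2) ^ (L - 1)"
    by (rule measure_survivors_le[where y = "\<lambda>i. x (\<nu> i)" and c = "\<lambda>m. a * x m"])
      (use \<delta> B(1) sep h(1) y_pos y1 q ratio L in auto)
  finally show ?thesis .
qed

text \<open>The separated points are \<open>a * x m\<close> for \<open>n0 \<le> m \<le> K\<close>, and the scales are the terms
  \<open>x (K + i * s)\<close> of the blocks of length \<open>s\<close> after \<open>K\<close>.\<close>
lemma measure_well_spaced_short_interval_le_blocks:
  fixes x :: "nat \<Rightarrow> real"
  assumes pos: "\<And>n. 1 \<le> n \<Longrightarrow> x n > 0"
    and mono: "\<And>m n. n0 \<le> m \<Longrightarrow> m \<le> n \<Longrightarrow> x m \<le> x n"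
    and n0: "1 \<le> n0" "n0 \<le> K"
    and \<delta>: "0 < \<delta>" "\<delta> \<le> 1"
    and q: "q = real (K + 1 - n0) * (\<delta> / 4)" "q \<le> 1"
    and s: "1 \<le> s" "\<And>n. K \<le> n \<Longrightarrow> n + s \<le> N \<Longrightarrow> 32 / \<delta> * x n \<le> x (n + s)"
    and L: "1 \<le> L" "K + L * s \<le> N"
    and h: "h * x K = \<delta> / 4"
  shows "measure lborel (well_spaced x N \<delta> \<inter> {a..<a + h}) \<le> 2 * h * (1 - q / 2) ^ (L - 1)"
proof -
  have h_pos: "h > 0"
    using zero_less_mult_pos2[of h "x K"] h pos[of K] n0 \<delta>(1) by simp
  define B where "B = {n0..K}"
  have card_B: "real (card B) = real (K + 1 - n0)" "1 \<le> real (card B)"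
    using n0 by (auto simp: B_def)
  have q_card: "q = real (card B) * (\<delta> / 4)"
    using q(1) card_B(1) by simp
  have q_pos: "0 < q"
    unfolding q_card using card_B(2) \<delta>(1) by (intro mult_pos_pos) auto
  have K_N: "K + s \<le> N" using L mult_le_mono1[OF L(1), of s] by linarith
  have subsequence: "K + i * s \<in> {1..N} - B" if "i \<in> {1..<L}" for i
  proof -
    have "i * s \<le> L * s" using that by (intro mult_le_mono1) simp
    with L(2) have "K + i * s \<le> N" by linarith
    moreover have "1 \<le> i * s" using that s(1) by simp
    ultimately show ?thesis using n0 by (auto simp: B_def)
  qed
  have y1: "2 \<le> x (K + 1 * s) * h"
  proof -
    have "32 / \<delta> * x K * h \<le> x (K + 1 * s) * h"
      using s(2)[of K] K_N h_pos by (intro mult_right_mono) auto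
    moreover have "32 / \<delta> * x K * h = 8" using h \<delta>(1) by (simp add: field_simps)
    ultimately show ?thesis by simp
  qed
  have ratio: "x (K + i * s) * (4 * real (card B) + 4) / q \<le> x (K + Suc i * s)"
    if "1 \<le> i" "i < L" for i
  proof -
    have "K + i * s + s \<le> K + L * s"
      using that mult_le_mono1[of "Suc i" L s] by simp
    then have "32 / \<delta> * x (K + i * s) \<le> x (K + i * s + s)"
      using s(2)[of "K + i * s"] L(2) by simp
    also have "x (K + i * s + s) = x (K + Suc i * s)"
      by (simp add: algebra_simps)
    moreover have "(4 * real (card B) + 4) / q \<le> 32 / \<delta>"
      using card_B(2) \<delta>(1) by (simp add: q_card field_simps)
    ultimately show ?thesis
      using mult_left_mono[of _ _ "x (K + i * s)"] pos[of "K + i * s"] n0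
      by (fastforce simp: mult.commute)
  qed
  show ?thesis
  proof (rule measure_well_spaced_short_interval_le[where \<nu> = "\<lambda>i. K + i * s" and B = B])
    show "0 < x m \<and> x m \<le> x K" if "m \<in> B" for m
      using that pos mono n0 by (auto simp: B_def)
  qed (use \<delta> h_pos h K_N subsequence pos n0 y1 q_card q_pos q(2) ratio L(1) in \<open>auto simp: B_def\<close>)
qed

lemma measure_Icc_le_of_short_intervals:
  assumes A: "A \<in> sets lborel" and h: "h > 0" and M: "M \<ge> 0" and c: "c \<ge> 0"
    and short: "\<And>k::int. measure lborel (A \<inter> {of_int k * h..<of_int k * h + h}) \<le> c"
  shows "measure lborel (A \<inter> {-M..M}) \<le> (2 * M / h + 2) * c"
proof -
  define I where "I = {\<lfloor>-M / h\<rfloor> .. \<lfloor>M / h\<rfloor>}"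
  have cover: "A \<inter> {-M..M} \<subseteq> (\<Union>k\<in>I. A \<inter> {of_int k * h..<of_int k * h + h})"
  proof
    fix \<alpha> assume \<alpha>: "\<alpha> \<in> A \<inter> {-M..M}"
    define k where "k = \<lfloor>\<alpha> / h\<rfloor>"
    have "of_int k \<le> \<alpha> / h" "\<alpha> / h < of_int k + 1" unfolding k_def by linarith+
    then have "of_int k * h \<le> \<alpha>" "\<alpha> < of_int k * h + h"
      using h by (simp_all add: pos_le_divide_eq pos_divide_less_eq algebra_simps)
    moreover have "-M / h \<le> \<alpha> / h" "\<alpha> / h \<le> M / h"
      using divide_right_mono[of "-M" \<alpha> h] divide_right_mono[of \<alpha> M h] \<alpha> h by auto
    then have "k \<in> I" unfolding I_def k_def by (auto intro: floor_mono)
    ultimately show "\<alpha> \<in> (\<Union>k\<in>I. A \<inter> {of_int k * h..<of_int k * h + h})" using \<alpha> by auto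
  qed
  have piece: "A \<inter> {of_int k * h..<of_int k * h + h} \<in> fmeasurable lborel" for k
  proof (rule fmeasurableI2[of "{of_int k * h..of_int k * h + h}"])
    show "{of_int k * h..of_int k * h + h} \<in> fmeasurable lborel"
      by (metis cbox_interval fmeasurable_cbox)
  qed (use A in auto)
  have "measure lborel (A \<inter> {-M..M}) \<le> measure lborel (\<Union>k\<in>I. A \<inter> {of_int k * h..<of_int k * h + h})"
  proof (rule measure_mono_fmeasurable[OF cover])
    show "A \<inter> {-M..M} \<in> sets lborel" using A by simp
    show "(\<Union>k\<in>I. A \<inter> {of_int k * h..<of_int k * h + h}) \<in> fmeasurable lborel"
      using piece by (intro fmeasurable.finite_UN) (auto simp: I_def)
  qed
  also have "\<dots> \<le> (\<Sum>k\<in>I. measure lborel (A \<inter> {of_int k * h..<of_int k * h + h}))"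
    using A by (intro measure_UNION_le) (auto simp: I_def)
  also have "\<dots> \<le> real (card I) * c"
    using sum_mono[of I _ "\<lambda>_. c", OF short] by simp
  also have "\<dots> \<le> (2 * M / h + 2) * c"
  proof (rule mult_right_mono[OF _ c])
    have "\<lfloor>-M / h\<rfloor> \<le> \<lfloor>M / h\<rfloor>" using M h by (intro floor_mono divide_right_mono) auto
    moreover have "\<lfloor>M / h\<rfloor> - \<lfloor>-M / h\<rfloor> + 1 \<le> M / h - (-M / h - 1) + 1" by linarith
    ultimately show "real (card I) \<le> 2 * M / h + 2" by (simp add: I_def of_nat_nat)
  qed
  finally show ?thesis .
qed

lemma measure_well_spaced_Icc_le:
  fixes x :: "nat \<Rightarrow> real"
  assumes pos: "\<And>n. 1 \<le> n \<Longrightarrow> x n > 0"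
    and mono: "\<And>m n. n0 \<le> m \<Longrightarrow> m \<le> n \<Longrightarrow> x m \<le> x n"
    and n0: "1 \<le> n0" "n0 \<le> K"
    and \<delta>: "0 < \<delta>" "\<delta> \<le> 1"
    and q: "q = real (K + 1 - n0) * (\<delta> / 4)" "q \<le> 1"
    and s: "1 \<le> s" "\<And>n. K \<le> n \<Longrightarrow> n + s \<le> N \<Longrightarrow> 32 / \<delta> * x n \<le> x (n + s)"
    and L: "1 \<le> L" "K + L * s \<le> N"
    and M: "M \<ge> 0"
  shows "measure lborel (well_spaced x N \<delta> \<inter> {-M..M})
    \<le> (4 * M + 1 / x n0) * exp (- (q * real (L - 1) / 2))"
proof -
  define h where "h = \<delta> / (4 * x K)"
  define P where "P = (1 - q / 2) ^ (L - 1)"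
  have x: "0 < x n0" "x n0 \<le> x K" using pos mono n0 by auto
  have h: "h * x K = \<delta> / 4" "0 < h" "4 * h \<le> 1 / x n0"
  proof -
    show "h * x K = \<delta> / 4" "0 < h" using x \<delta> by (simp_all add: h_def)
    have "4 * h \<le> 1 / x K" using x \<delta> by (simp add: h_def divide_right_mono)
    also have "\<dots> \<le> 1 / x n0" using x by (simp add: frac_le)
    finally show "4 * h \<le> 1 / x n0" .
  qed
  have q_nonneg: "0 \<le> q" unfolding q(1) using \<delta>(1) by simp
  have P: "0 \<le> P" "P \<le> exp (- (q * real (L - 1) / 2))"
  proof -
    show "0 \<le> P" using q(2) by (simp add: P_def)
    have "P \<le> exp (- (q / 2)) ^ (L - 1)"
      unfolding P_def using q(2) exp_ge_add_one_self[of "- (q / 2)"] by (intro power_mono) auto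
    also have "\<dots> = exp (- (q * real (L - 1) / 2))"
      by (subst exp_of_nat_mult[symmetric]) (simp add: algebra_simps)
    finally show "P \<le> exp (- (q * real (L - 1) / 2))" .
  qed
  have "measure lborel (well_spaced x N \<delta> \<inter> {-M..M}) \<le> (2 * M / h + 2) * (2 * h * P)"
    using measure_well_spaced_short_interval_le_blocks[OF pos mono n0 \<delta> q s L h(1)] h(2) P(1) M
    by (intro measure_Icc_le_of_short_intervals) (auto simp: P_def)
  also have "\<dots> = (4 * M + 4 * h) * P" using h(2) by (simp add: field_simps)
  also have "\<dots> \<le> (4 * M + 1 / x n0) * exp (- (q * real (L - 1) / 2))"
    using h(3) P M x by (intro mult_mono) auto
  finally show ?thesis .
qed

section \<open>Consequences of the growth hypothesis\<close>

lemma growth_imp_monotone: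
  fixes x :: "nat \<Rightarrow> real"
  assumes pos: "\<And>n. 1 \<le> n \<Longrightarrow> x n > 0"
    and gr: "\<And>n. n0 \<le> n \<Longrightarrow> (1 + 1 / real n powr e) * x n \<le> x (Suc n)"
    and n0: "1 \<le> n0" and mn: "n0 \<le> m" "m \<le> n"
  shows "x m \<le> x n"
proof (rule lift_Suc_mono_le_ivl[where N = "{n0..}", OF _ mn(2)])
  show "x k \<le> x (Suc k)" if "k \<in> {n0..}" for k
  proof -
    have "x k \<le> (1 + 1 / real k powr e) * x k"
      using pos[of k] n0 that by (simp add: algebra_simps)
    also have "\<dots> \<le> x (Suc k)" using gr that by simp
    finally show ?thesis .
  qed
qed (use mn in auto)

lemma growth_power_le:
  fixes x :: "nat \<Rightarrow> real"
  assumes pos: "\<And>n. 1 \<le> n \<Longrightarrow> x n > 0"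
    and gr: "\<And>n. n0 \<le> n \<Longrightarrow> (1 + 1 / real n powr e) * x n \<le> x (Suc n)"
    and n0: "1 \<le> n0" and e: "e > 0" and n: "n0 \<le> n" "n + j \<le> N"
  shows "(1 + 1 / real N powr e) ^ j * x n \<le> x (n + j)"
  using n(2)
proof (induction j)
  case 0
  then show ?case by simp
next
  case (Suc j)
  have IH: "(1 + 1 / real N powr e) ^ j * x n \<le> x (n + j)" using Suc by simp
  have nj: "1 \<le> n + j" "n + j \<le> N" using n0 n Suc by auto
  have "1 / real N powr e \<le> 1 / real (n + j) powr e"
    using nj e by (intro divide_left_mono powr_mono2) auto
  then have factor: "1 + 1 / real N powr e \<le> 1 + 1 / real (n + j) powr e" by simp
  have "(1 + 1 / real N powr e) ^ Suc j * x n
      = (1 + 1 / real N powr e) * ((1 + 1 / real N powr e) ^ j * x n)"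
    by simp
  also have "\<dots> \<le> (1 + 1 / real N powr e) * x (n + j)"
    by (rule mult_left_mono[OF IH]) simp
  also have "\<dots> \<le> (1 + 1 / real (n + j) powr e) * x (n + j)"
    using pos[OF nj(1)] by (intro mult_right_mono[OF factor]) simp
  also have "\<dots> \<le> x (Suc (n + j))" using gr[of "n + j"] n by simp
  finally show ?case by simp
qed

lemma growth_over_block:
  fixes x :: "nat \<Rightarrow> real"
  assumes pos: "\<And>n. 1 \<le> n \<Longrightarrow> x n > 0"
    and gr: "\<And>n. n0 \<le> n \<Longrightarrow> (1 + 1 / real n powr e) * x n \<le> x (Suc n)"
    and n0: "1 \<le> n0" and e: "e > 0" and n: "n0 \<le> n" "n + s \<le> N"
    and R: "1 \<le> R" and s: "2 * real N powr e * ln R \<le> real s"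
  shows "R * x n \<le> x (n + s)"
proof -
  define u where "u = 1 / real N powr e"
  have N: "1 \<le> real N" using n0 n by simp
  have "1 \<le> real N powr e" using N e by (intro ge_one_powr_ge_zero) auto
  then have u: "0 < u" "u \<le> 1" "real N powr e * u = 1" using N by (auto simp: u_def field_simps)
  have "2 * ln R = 2 * real N powr e * ln R * u" using u(3) by (simp add: algebra_simps)
  also have "\<dots> \<le> real s * u" using s u by (intro mult_right_mono) auto
  finally have ln_R: "ln R \<le> real s * (u / 2)" by simp
  have "R = exp (ln R)" using R by simp
  also have "\<dots> \<le> exp (real s * (u / 2))" using ln_R by simp
  also have "\<dots> = exp (u / 2) ^ s" by (rule exp_of_nat_mult)
  also have "\<dots> \<le> (1 + u) ^ s"
    using real_exp_bound_lemma[of "u / 2"] u by (intro power_mono) auto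
  finally have "R * x n \<le> (1 + u) ^ s * x n"
    using pos[of n] n0 n by (intro mult_right_mono) auto
  also have "\<dots> \<le> x (n + s)"
    unfolding u_def by (rule growth_power_le[OF pos gr n0 e n])
  finally show ?thesis .
qed

lemma block_length_exists:
  fixes x :: "nat \<Rightarrow> real"
  assumes pos: "\<And>n. 1 \<le> n \<Longrightarrow> x n > 0"
    and gr: "\<And>n. n0 \<le> n \<Longrightarrow> (1 + 1 / real n powr e) * x n \<le> x (Suc n)"
    and n0: "1 \<le> n0" and e: "e > 0" and N: "1 \<le> real N" and R: "1 < R"
  obtains s where "1 \<le> s" "real s \<le> 2 * real N powr e * ln R + 1"
    "\<And>n. n0 \<le> n \<Longrightarrow> n + s \<le> N \<Longrightarrow> R * x n \<le> x (n + s)"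
proof -
  define s where "s = nat \<lceil>2 * real N powr e * ln R\<rceil>"
  have bound_pos: "0 < 2 * real N powr e * ln R"
    using N R by (intro mult_pos_pos) auto
  then have s_real: "real s = of_int \<lceil>2 * real N powr e * ln R\<rceil>"
    by (simp add: s_def)
  then have s_ge: "2 * real N powr e * ln R \<le> real s" by linarith
  show thesis
  proof (rule that)
    show "1 \<le> s" using s_ge bound_pos by linarith
    show "real s \<le> 2 * real N powr e * ln R + 1" using s_real by linarith
    show "R * x n \<le> x (n + s)" if "n0 \<le> n" "n + s \<le> N" for n
      using growth_over_block[OF pos gr n0 e that less_imp_le[OF R] s_ge] .
  qed
qed

lemma real_of_nat_div_gt:
  assumes "0 < b"
  shows "real a / real b - 1 < real (a div b)"
proof -
  have "real (a mod b) / real b < 1" using assms by (simp add: divide_less_eq)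
  then show ?thesis using of_nat_of_nat_div_aux[where 'a = real, of a b] by linarith
qed

text \<open>\<open>Llow\<close> and \<open>qlow\<close> are explicit lower bounds for the number \<open>L - 1\<close> of scales and the
  proportion \<open>q\<close> chosen in the proof; the two hypotheses on them hold for large \<open>N\<close>.\<close>
lemma measure_well_spaced_le_inverse_square:
  fixes x :: "nat \<Rightarrow> real" and \<epsilon> M :: real and N n0 :: nat
  assumes pos: "\<And>n. 1 \<le> n \<Longrightarrow> x n > 0"
    and gr: "\<And>n. n0 \<le> n \<Longrightarrow> (1 + 1 / real n powr (\<epsilon> / 2)) * x n \<le> x (Suc n)"
    and n0: "1 \<le> n0" and \<epsilon>: "0 < \<epsilon>" "\<epsilon> < 1" and M: "M \<ge> 0"
    and N: "2 * real n0 + 2 \<le> real N"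
  defines "Llow \<equiv> real N / 2 / (2 * real N powr (\<epsilon> / 2) * ln (32 * real N powr (2 - \<epsilon>)) + 1) - 2"
    and "qlow \<equiv> (real N / 2 - real n0) * real N powr (\<epsilon> - 2) / 4"
  assumes Llow: "0 \<le> Llow"
    and small: "(4 * M + 1 / x n0) * exp (- (qlow * Llow / 2)) \<le> 1 / real N ^ 2"
  shows "measure lborel (well_spaced x N (real N powr (\<epsilon> - 2)) \<inter> {-M..M}) \<le> 1 / real N ^ 2"
proof -
  have mono: "x m \<le> x n" if "n0 \<le> m" "m \<le> n" for m n
    by (rule growth_imp_monotone[OF pos gr n0 that])
  have N1: "1 \<le> real N" using N by simp
  define K where "K = N div 2"
  have "2 * K \<le> N" "N \<le> 2 * K + 1" unfolding K_def by presburger+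
  then have K_real: "2 * real K \<le> real N" "real N \<le> 2 * real K + 1"
    using of_nat_mono[of "2 * K" N] of_nat_mono[of N "2 * K + 1"] by simp_all
  have K: "n0 \<le> K" "K \<le> N" "real N / 2 \<le> real (N - K)"
    using N K_real by (simp_all add: of_nat_diff)
  define \<delta> where "\<delta> = real N powr (\<epsilon> - 2)"
  have \<delta>: "0 < \<delta>" "\<delta> \<le> 1" "real N * \<delta> \<le> 1"
  proof -
    show "0 < \<delta>" using N1 by (simp add: \<delta>_def)
    show "\<delta> \<le> 1" using N1 \<epsilon> powr_mono[of "\<epsilon> - 2" 0 "real N"] by (simp add: \<delta>_def)
    have "real N * \<delta> = real N powr (1 + (\<epsilon> - 2))"
      using N1 by (simp add: \<delta>_def powr_mult_base)
    also have "\<dots> \<le> 1" using N1 \<epsilon> powr_mono[of "1 + (\<epsilon> - 2)" 0 "real N"] by simp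
    finally show "real N * \<delta> \<le> 1" .
  qed
  define q where "q = real (K + 1 - n0) * (\<delta> / 4)"
  have q: "q \<le> 1" "qlow \<le> q" "0 \<le> qlow"
  proof -
    have "q \<le> real N * (\<delta> / 4)" unfolding q_def using K n0 \<delta>(1) by (intro mult_right_mono) auto
    then show "q \<le> 1" using \<delta>(3) by simp
    have "real N / 2 - real n0 \<le> real (K + 1 - n0)" using K K_real by (simp add: of_nat_diff)
    then show "qlow \<le> q" using \<delta>(1) by (simp add: q_def qlow_def \<delta>_def[symmetric] mult_right_mono)
    show "0 \<le> qlow" using N \<delta>(1) by (simp add: qlow_def \<delta>_def[symmetric])
  qed
  define R where "R = 32 * real N powr (2 - \<epsilon>)"
  have R: "32 / \<delta> = R" "32 \<le> R"
  proof -
    have "\<delta> * real N powr (2 - \<epsilon>) = 1"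
      using N1 by (simp add: \<delta>_def powr_add[symmetric])
    then show "32 / \<delta> = R" using \<delta>(1) by (simp add: R_def field_simps)
    have "1 \<le> real N powr (2 - \<epsilon>)" using N1 \<epsilon> by (intro ge_one_powr_ge_zero) auto
    then show "32 \<le> R" by (simp add: R_def)
  qed
  obtain s where s: "1 \<le> s" "real s \<le> 2 * real N powr (\<epsilon> / 2) * ln R + 1"
    and R_growth: "\<And>n. n0 \<le> n \<Longrightarrow> n + s \<le> N \<Longrightarrow> R * x n \<le> x (n + s)"
    using block_length_exists[OF pos gr n0 _ N1, of R] \<epsilon>(1) R(2) by auto
  have block: "32 / \<delta> * x n \<le> x (n + s)" if "K \<le> n" "n + s \<le> N" for n
    unfolding R(1) using R_growth K(1) that by simp
  define L where "L = (N - K) div s"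
  have L: "K + L * s \<le> N" "Llow \<le> real L - 1" "1 \<le> L"
  proof -
    show "K + L * s \<le> N"
      using K(2) div_times_less_eq_dividend[of "N - K" s] unfolding L_def by linarith
    have "real N / 2 / (2 * real N powr (\<epsilon> / 2) * ln R + 1) \<le> real (N - K) / real s"
      using K(3) s by (intro frac_le) auto
    then show "Llow \<le> real L - 1"
      using real_of_nat_div_gt[of s "N - K"] s(1) unfolding Llow_def R_def[symmetric] L_def by linarith
    then show "1 \<le> L" using Llow by linarith
  qed
  have "measure lborel (well_spaced x N \<delta> \<inter> {-M..M})
      \<le> (4 * M + 1 / x n0) * exp (- (q * real (L - 1) / 2))"
    by (rule measure_well_spaced_Icc_le[where x = x and K = K and \<delta> = \<delta> and N = N,
          OF pos mono n0 K(1) \<delta>(1,2) q_def q(1) s(1) block L(3,1) M])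
  also have "\<dots> \<le> (4 * M + 1 / x n0) * exp (- (qlow * Llow / 2))"
  proof (rule mult_left_mono)
    have "qlow * Llow \<le> q * real (L - 1)"
      using q L Llow by (intro mult_mono) (auto simp: of_nat_diff)
    then show "exp (- (q * real (L - 1) / 2)) \<le> exp (- (qlow * Llow / 2))" by simp
    show "0 \<le> 4 * M + 1 / x n0" using M pos[OF n0] by simp
  qed
  also have "\<dots> \<le> 1 / real N ^ 2" by (rule small)
  finally show ?thesis by (simp add: \<delta>_def)
qed

lemma eventually_measure_well_spaced_le:
  fixes x :: "nat \<Rightarrow> real" and \<epsilon> M :: real and n0 :: nat
  assumes pos: "\<And>n. 1 \<le> n \<Longrightarrow> x n > 0"
    and gr: "\<And>n. n0 \<le> n \<Longrightarrow> (1 + 1 / real n powr (\<epsilon> / 2)) * x n \<le> x (Suc n)"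
    and n0: "1 \<le> n0" and \<epsilon>: "0 < \<epsilon>" "\<epsilon> < 1" and M: "M \<ge> 0"
  shows "\<forall>\<^sub>F N in sequentially.
    measure lborel (well_spaced x N (real N powr (\<epsilon> - 2)) \<inter> {-M..M}) \<le> 1 / real N ^ 2"
proof -
  define C where "C = 4 * M + 1 / x n0"
  define Llow where "Llow N = N / 2 / (2 * N powr (\<epsilon> / 2) * ln (32 * N powr (2 - \<epsilon>)) + 1) - 2"
    for N :: real
  define qlow where "qlow N = (N / 2 - real n0) * N powr (\<epsilon> - 2) / 4" for N :: real
  have "\<forall>\<^sub>F N in at_top. 2 * real n0 + 2 \<le> N" by (rule eventually_ge_at_top)
  moreover have "\<forall>\<^sub>F N in at_top. 0 \<le> Llow N"
    unfolding Llow_def using \<epsilon> by real_asymp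
  moreover have "\<forall>\<^sub>F N in at_top. C * exp (- (qlow N * Llow N / 2)) \<le> 1 / N ^ 2"
    unfolding Llow_def qlow_def using \<epsilon> by real_asymp
  ultimately have "\<forall>\<^sub>F N in at_top. 2 * real n0 + 2 \<le> N \<and> 0 \<le> Llow N \<and>
      C * exp (- (qlow N * Llow N / 2)) \<le> 1 / N ^ 2"
    by eventually_elim blast
  then have "\<forall>\<^sub>F N in sequentially. 2 * real n0 + 2 \<le> real N \<and> 0 \<le> Llow (real N) \<and>
      C * exp (- (qlow (real N) * Llow (real N) / 2)) \<le> 1 / real N ^ 2"
    by (rule eventually_compose_filterlim[OF _ filterlim_real_sequentially])
  then show ?thesis
  proof (rule eventually_mono)
    fix N :: nat
    assume "2 * real n0 + 2 \<le> real N \<and> 0 \<le> Llow (real N) \<and>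
      C * exp (- (qlow (real N) * Llow (real N) / 2)) \<le> 1 / real N ^ 2"
    then show "measure lborel (well_spaced x N (real N powr (\<epsilon> - 2)) \<inter> {-M..M}) \<le> 1 / real N ^ 2"
      by (intro measure_well_spaced_le_inverse_square[OF pos gr n0 \<epsilon> M])
        (simp_all add: C_def Llow_def qlow_def)
  qed
qed

section \<open>Almost every dilation\<close>

lemma AE_eventually_notin_if_locally_summable:
  fixes A :: "nat \<Rightarrow> real set"
  assumes [measurable]: "\<And>N. A N \<in> sets lborel"
    and summable: "\<And>M::nat. summable (\<lambda>N. measure lborel (A N \<inter> {- real M..real M}))"
  shows "AE \<alpha> in lborel. \<forall>\<^sub>F N in sequentially. \<alpha> \<notin> A N"
proof -
  have "AE \<alpha> in lborel. \<alpha> \<in> {- real M..real M} \<longrightarrow> (\<forall>\<^sub>F N in sequentially. \<alpha> \<notin> A N)"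
    for M :: nat
  proof -
    have "emeasure lborel (A N \<inter> {- real M..real M}) < \<infinity>" for N
      by (rule le_less_trans[OF emeasure_mono[of _ "{- real M..real M}"]]) auto
    then have "AE \<alpha> in lborel. \<forall>\<^sub>F N in sequentially. \<alpha> \<in> space lborel - A N \<inter> {- real M..real M}"
      by (intro borel_cantelli_AE1 summable) auto
    then show ?thesis
    proof (rule eventually_mono, intro impI)
      fix \<alpha> :: real
      assume ev: "\<forall>\<^sub>F N in sequentially. \<alpha> \<in> space lborel - A N \<inter> {- real M..real M}"
        and \<alpha>: "\<alpha> \<in> {- real M..real M}"
      from ev show "\<forall>\<^sub>F N in sequentially. \<alpha> \<notin> A N"
        by (rule eventually_mono) (use \<alpha> in auto)
    qed
  qed
  then have "AE \<alpha> in lborel. \<forall>M::nat. \<alpha> \<in> {- real M..real M} \<longrightarrow> (\<forall>\<^sub>F N in sequentially. \<alpha> \<notin> A N)"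
    unfolding AE_all_countable ..
  then show ?thesis
  proof (rule eventually_mono)
    fix \<alpha> :: real
    assume "\<forall>M::nat. \<alpha> \<in> {- real M..real M} \<longrightarrow> (\<forall>\<^sub>F N in sequentially. \<alpha> \<notin> A N)"
    moreover have "\<alpha> \<in> {- real (nat \<lceil>\<bar>\<alpha>\<bar>\<rceil>)..real (nat \<lceil>\<bar>\<alpha>\<bar>\<rceil>)}" by auto linarith+
    ultimately show "\<forall>\<^sub>F N in sequentially. \<alpha> \<notin> A N" by blast
  qed
qed

lemma AE_eventually_not_well_spaced:
  fixes x :: "nat \<Rightarrow> real" and \<epsilon> :: real
  assumes pos: "\<And>n. 1 \<le> n \<Longrightarrow> x n > 0"
    and growth: "\<forall>\<^sub>F n in sequentially. x (n + 1) > (1 + 1 / real n powr (\<epsilon> / 2)) * x n"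
    and \<epsilon>: "0 < \<epsilon>" "\<epsilon> < 1"
  shows "AE \<alpha> in lborel. \<forall>\<^sub>F N in sequentially. \<alpha> \<notin> well_spaced x N (real N powr (\<epsilon> - 2))"
proof (rule AE_eventually_notin_if_locally_summable)
  obtain n1 where n1: "\<And>n. n1 \<le> n \<Longrightarrow> x (n + 1) > (1 + 1 / real n powr (\<epsilon> / 2)) * x n"
    using growth unfolding eventually_sequentially by blast
  define n0 where "n0 = max 1 n1"
  have n0: "1 \<le> n0" by (simp add: n0_def)
  have gr: "(1 + 1 / real n powr (\<epsilon> / 2)) * x n \<le> x (Suc n)" if "n0 \<le> n" for n
    using n1[of n] that by (simp add: n0_def)
  fix M :: nat
  show "summable (\<lambda>N. measure lborel (well_spaced x N (real N powr (\<epsilon> - 2)) \<inter> {- real M..real M}))"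
  proof (rule summable_comparison_test_ev)
    show "\<forall>\<^sub>F N in sequentially.
      norm (measure lborel (well_spaced x N (real N powr (\<epsilon> - 2)) \<inter> {- real M..real M}))
        \<le> inverse (real N ^ 2)"
      using eventually_measure_well_spaced_le[OF pos gr n0 \<epsilon>, of "real M"]
      by (simp add: divide_inverse)
    show "summable (\<lambda>N. inverse (real N ^ 2))" by (rule inverse_power_summable) simp
  qed
qed simp

text \<open>The rate is \<open>f N = 1 / (k + 2)\<close> for the largest \<open>k \<le> N\<close> whose bound already holds at \<open>N\<close>.\<close>
lemma vanishing_exponent_from_countably_many:
  fixes D :: "nat \<Rightarrow> real"
  assumes ev: "\<And>k::nat. \<forall>\<^sub>F N in sequentially. D N < real N powr (- (2 - 1 / (real k + 2)))"
  shows "\<exists>f :: nat \<Rightarrow> real. f \<longlonglongrightarrow> 0 \<and> (\<forall>\<^sub>F N in sequentially. D N < real N powr (- (2 - f N)))"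
proof -
  define P where "P k N \<longleftrightarrow> D N < real N powr (- (2 - 1 / (real k + 2)))" for k N
  define g where "g N = (GREATEST k. k \<le> N \<and> P k N)" for N
  define f where "f N = (if \<exists>k\<le>N. P k N then 1 / (real (g N) + 2) else 1)" for N
  have g: "g N \<le> N" "P (g N) N" if "\<exists>k\<le>N. P k N" for N
    using GreatestI_ex_nat[of "\<lambda>k. k \<le> N \<and> P k N" N] that by (auto simp: g_def)
  have g_greatest: "k \<le> g N" if "k \<le> N" "P k N" for k N
    unfolding g_def by (rule Greatest_le_nat) (use that in auto)
  have "\<forall>\<^sub>F N in sequentially. D N < real N powr (- (2 - f N))"
    using ev[of 0]
  proof (rule eventually_mono)
    fix N assume "D N < real N powr (- (2 - 1 / (real (0::nat) + 2)))"
    then have ex: "\<exists>k\<le>N. P k N" by (auto simp: P_def)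
    with g[OF ex] show "D N < real N powr (- (2 - f N))" by (simp add: f_def P_def)
  qed
  moreover have "f \<longlonglongrightarrow> 0"
  proof (rule order_tendstoI)
    fix a :: real assume "a < 0"
    have "0 < f N" for N by (simp add: f_def)
    then show "\<forall>\<^sub>F N in sequentially. a < f N"
      by (intro always_eventually allI less_trans[OF \<open>a < 0\<close>])
  next
    fix a :: real assume a: "0 < a"
    define k where "k = nat \<lceil>1 / a\<rceil>"
    have "1 / a < real k + 2" unfolding k_def by linarith
    then have k: "1 / (real k + 2) < a" using a by (simp add: divide_less_eq mult.commute)
    have "\<forall>\<^sub>F N in sequentially. P k N \<and> k \<le> N"
      using ev[of k] eventually_ge_at_top[of k] by eventually_elim (simp add: P_def)
    then show "\<forall>\<^sub>F N in sequentially. f N < a"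
    proof (rule eventually_mono)
      fix N assume N: "P k N \<and> k \<le> N"
      then have ex: "\<exists>k\<le>N. P k N" by auto
      have "1 / (real (g N) + 2) \<le> 1 / (real k + 2)"
        using g_greatest N by (intro divide_left_mono) auto
      with ex k show "f N < a" by (simp add: f_def)
    qed
  qed
  ultimately show ?thesis by blast
qed

theorem theorem5:
  fixes x :: "nat \<Rightarrow> real"
  assumes pos: "\<forall>n\<ge>1. x n > 0"
    and growth: "\<forall>\<epsilon>::real. \<epsilon> > 0 \<longrightarrow>
        (\<forall>\<^sub>F n in sequentially. x (n + 1) > (1 + 1 / real n powr \<epsilon>) * x n)"
  shows "AE \<alpha> in lborel. \<exists>f :: nat \<Rightarrow> real. (f \<longlonglongrightarrow> 0) \<and>
           (\<forall>\<^sub>F N in sequentially. delta_min \<alpha> x N < real N powr (- (2 - f N)))"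
proof -
  have "AE \<alpha> in lborel. \<forall>\<^sub>F N in sequentially.
      delta_min \<alpha> x N < real N powr (- (2 - 1 / (real k + 2)))" for k :: nat
  proof -
    define \<epsilon> where "\<epsilon> = 1 / (real k + 2)"
    have \<epsilon>: "0 < \<epsilon>" "\<epsilon> < 1" by (auto simp: \<epsilon>_def)
    have "AE \<alpha> in lborel. \<forall>\<^sub>F N in sequentially. \<alpha> \<notin> well_spaced x N (real N powr (\<epsilon> - 2))"
      using pos growth \<epsilon> by (intro AE_eventually_not_well_spaced) auto
    then show ?thesis
      by (rule eventually_mono) (auto elim!: eventually_mono dest: delta_min_less_if_not_well_spaced simp: \<epsilon>_def)
  qed
  then have "AE \<alpha> in lborel. \<forall>k::nat. \<forall>\<^sub>F N in sequentially.
      delta_min \<alpha> x N < real N powr (- (2 - 1 / (real k + 2)))"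
    unfolding AE_all_countable ..
  then show ?thesis
    by (rule eventually_mono) (rule vanishing_exponent_from_countably_many, blast)
qed

end
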